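(* Fix $m\in\mathbb N$ and $r\ge2$, and let $(A_{m,r},B_{m,r})$, together with the level-$(r-1)$ pairs $(A^{(j)},B^{(j)})$ and index $i$ used in its construction, be drawn from $I_{m,r}$ as described in the context, where the parameter $\epsilon$ at each level of the construction is chosen sufficiently small as a function of $m$ and the level. Then, almost surely, the following are equivalent: (1) $\mathrm{conv}(A_{m,r})\cap\mathrm{conv}(B_{m,r})=\emptyset$; (2) $A^{(i)}\cap B^{(i)}=\emptyset$; (3) $A_{m,r}\cap B_{m,r}=\emptyset$.
   Context: The random pair $I_{m,r}=(A_{m,r},B_{m,r})$ of finite subsets of $\mathbb R^2$ is defined recursively. For $r=1$: $A_{m,1}=\{(0,0)\}$ and $B_{m,1}$ is uniformly either $\{(0,0)\}$ or $\emptyset$. For $r>1$: let $p_1,\dots,p_m$ be $m$ evenly spaced points on the part of the unit circle in the open positive quadrant $\{(x,y):x>0,y>0\}$; let $\epsilon>0$ be a parameter; let $U_j$ be the rotation matrix mapping the $y$-axis direction $e_2$ to $p_j$ and $e_1$ to a unit vector $p_j^\perp$ orthogonal to $p_j$; let $T_j(v)=U_j\begin{pmatrix}-\epsilon&0\\0&-\epsilon^2\end{pmatrix}v+p_j$. Draw $(A^{(1)},B^{(1)}),\dots,(A^{(m)},B^{(m)})$ i.i.d. from $I_{m,r-1}$ and $i$ uniform in $[m]$ independently, and set $A_{m,r}=\bigcup_{j=1}^mT_j(B^{(j)})$ and $B_{m,r}=T_i(A^{(i)})$. $\mathrm{conv}$ denotes convex hull. *)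

theory Defs
  imports "HOL-Analysis.Analysis" "HOL-Probability.Probability"
begin

type_synonym pt = "real \<times> real"
type_synonym pr = "pt set \<times> pt set"

definition ang :: "nat \<Rightarrow> nat \<Rightarrow> real" where
  "ang m j = real j * pi / (2 * (real m + 1))"

definition pj :: "nat \<Rightarrow> nat \<Rightarrow> pt" where
  "pj m j = (cos (ang m j), sin (ang m j))"

text \<open>Rotation U_j: e2 maps to p_j, e1 maps to p_j^perp = (sin theta, - cos theta)
  (rotation by theta - pi/2).\<close>
definition Urot :: "nat \<Rightarrow> nat \<Rightarrow> pt \<Rightarrow> pt" where
  "Urot m j v = (fst v * sin (ang m j) + snd v * cos (ang m j),
                 - fst v * cos (ang m j) + snd v * sin (ang m j))"

definition Tmap :: "nat \<Rightarrow> real \<Rightarrow> nat \<Rightarrow> pt \<Rightarrow> pt" where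
  "Tmap m e j v = Urot m j (- e * fst v, - (e ^ 2) * snd v) + pj m j"

text \<open>Given the level-(r-1) pairs f j (j = 1..m) and the index i, the level-r pair.\<close>
definition build :: "nat \<Rightarrow> real \<Rightarrow> (nat \<Rightarrow> pr) \<times> nat \<Rightarrow> pr" where
  "build m e w = (\<Union>j\<in>{1..m}. Tmap m e j ` snd (fst w j),
                  Tmap m e (snd w) ` fst (fst w (snd w)))"

definition base_pmf :: "pr pmf" where
  "base_pmf = map_pmf (\<lambda>b. ({(0,0)}, if b then {(0,0)} else {})) (bernoulli_pmf (1/2))"

text \<open>I m eps r : the random pair I_{m,r}, where eps k is the parameter used at level k.
  (Level 0 is a dummy, set equal to level 1.)\<close>
fun Ipmf :: "nat \<Rightarrow> (nat \<Rightarrow> real) \<Rightarrow> nat \<Rightarrow> pr pmf" where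
  "Ipmf m eps 0 = base_pmf"
| "Ipmf m eps (Suc 0) = base_pmf"
| "Ipmf m eps (Suc (Suc k)) =
     map_pmf (build m (eps (Suc (Suc k))))
       (pair_pmf (Pi_pmf {1..m} undefined (\<lambda>_. Ipmf m eps (Suc k))) (pmf_of_set {1..m}))"

definition joint :: "nat \<Rightarrow> (nat \<Rightarrow> real) \<Rightarrow> nat \<Rightarrow> ((nat \<Rightarrow> pr) \<times> nat) pmf" where
  "joint m eps r = pair_pmf (Pi_pmf {1..m} undefined (\<lambda>_. Ipmf m eps (r - 1))) (pmf_of_set {1..m})"

lemma Ipmf_joint: "r \<ge> 2 \<Longrightarrow> Ipmf m eps r = map_pmf (build m (eps r)) (joint m eps r)"
  proof -
  assume "r \<ge> 2"
  then obtain k where "r = Suc (Suc k)" by (metis add_2_eq_Suc le_Suc_ex)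
  then show ?thesis by (simp add: joint_def)
qed

end

theory Submission
  imports Defs
begin

text \<open>The equivalence holds for every outcome, not only almost surely. By induction on the
  level, every pair in the support lies in the square [-2,2] x [-2,2] and, if its two sets are
  disjoint, they are strictly separated by a line  a x + y = c  with  |a|, |c| \<le> M, where M
  depends only on m. Given such a line for (A^(i), B^(i)), the map T_i sends it to a line
  through a point close to p_i whose normal is close to p_i; since T_i reverses orientation,
  T_i(A^(i)) = B lies beyond it, away from the origin. Every other piece T_j(B^(j)), j \<noteq> i,
  lies within O(\<epsilon>) of p_j, whose projection onto the direction p_i is at most cos \<Delta> < 1,
  \<Delta> being the angular gap between consecutive p_j; so for small \<epsilon> all of A lies on the other
  side. Thus (2) gives (1), (1) gives (3) trivially, and a common point u of A^(i), B^(i) gives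
  the common point T_i u of A and B.\<close>

lemma abs_mult_le_mult:
  fixes x y a b :: real
  assumes "\<bar>x\<bar> \<le> a" "\<bar>y\<bar> \<le> b"
  shows "\<bar>x * y\<bar> \<le> a * b"
  unfolding abs_mult using assms by (intro mult_mono) auto

lemma abs_eps_mult_le:
  fixes e c M :: real
  assumes "0 < e" "e \<le> 1" "\<bar>c\<bar> \<le> M"
  shows "\<bar>e * c\<bar> \<le> e * M" "\<bar>e\<^sup>2 * c\<bar> \<le> e * M"
proof -
  show "\<bar>e * c\<bar> \<le> e * M" using assms by (simp add: abs_mult mult_left_mono)
  have "\<bar>e\<^sup>2 * c\<bar> = e * (e * \<bar>c\<bar>)" using assms by (simp add: abs_mult power2_eq_square)
  also have "\<dots> \<le> e * (1 * M)" using assms by (intro mult_left_mono mult_mono) auto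
  finally show "\<bar>e\<^sup>2 * c\<bar> \<le> e * M" by simp
qed

definition ang_step :: "nat \<Rightarrow> real" where
  "ang_step m = pi / (2 * (real m + 1))"

lemma ang_eq_mult_ang_step: "ang m j = real j * ang_step m"
  by (simp add: ang_def ang_step_def)

lemma ang_step_pos: "0 < ang_step m"
  by (simp add: ang_step_def add_pos_nonneg)

lemma mult_ang_step_less: "real m * ang_step m < pi / 2"
proof -
  have "real m * ang_step m = pi / 2 * (real m / (real m + 1))"
    by (simp add: ang_step_def field_simps)
  also have "\<dots> < pi / 2" by (simp add: field_simps)
  finally show ?thesis .
qed

lemma mult_ang_step_bounds:
  assumes "1 \<le> k" "k \<le> real m"
  shows "ang_step m \<le> k * ang_step m" "k * ang_step m < pi / 2"
proof -
  show "ang_step m \<le> k * ang_step m" using assms ang_step_pos[of m] by simp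
  have "k * ang_step m \<le> real m * ang_step m"
    using assms ang_step_pos[of m] by (simp add: mult_right_mono)
  then show "k * ang_step m < pi / 2" using mult_ang_step_less[of m] by linarith
qed

lemma sin_ang_step_pos: "m \<ge> 1 \<Longrightarrow> 0 < sin (ang_step m)"
  using mult_ang_step_bounds[of 1 m] ang_step_pos[of m] by (intro sin_gt_zero) auto

lemma cos_ang_step_less_1: "m \<ge> 1 \<Longrightarrow> cos (ang_step m) < 1"
  using mult_ang_step_bounds[of 1 m] ang_step_pos[of m] cos_monotone_0_pi[of 0 "ang_step m"]
  by auto

lemma sin_ang_step_le_sin_ang:
  assumes "j \<in> {1..m}"
  shows "sin (ang_step m) \<le> sin (ang m j)"
proof -
  have "1 \<le> real j" "real j \<le> real m" using assms by auto
  note bounds = mult_ang_step_bounds[OF this]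
  show ?thesis
    unfolding ang_eq_mult_ang_step using bounds ang_step_pos[of m] pi_gt_zero
    by (intro sin_monotone_2pi_le) linarith+
qed

lemma cos_ang_diff_le:
  assumes "i \<in> {1..m}" "j \<in> {1..m}" "i \<noteq> j"
  shows "cos (ang m i) * cos (ang m j) + sin (ang m i) * sin (ang m j) \<le> cos (ang_step m)"
proof -
  define k where "k = \<bar>real i - real j\<bar>"
  have k: "1 \<le> k" "k \<le> real m" using assms unfolding k_def by (cases "i < j"; auto)+
  have "cos (ang m i) * cos (ang m j) + sin (ang m i) * sin (ang m j) = cos (ang m i - ang m j)"
    by (simp add: cos_diff)
  also have "\<dots> = cos \<bar>ang m i - ang m j\<bar>" by simp
  also have "\<dots> = cos (k * ang_step m)"
    using ang_step_pos[of m] by (simp add: k_def ang_eq_mult_ang_step abs_mult flip: left_diff_distrib)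
  also have "\<dots> \<le> cos (ang_step m)"
    using mult_ang_step_bounds[OF k] ang_step_pos[of m] pi_gt_zero
    by (intro cos_monotone_0_pi_le) linarith+
  finally show ?thesis .
qed

lemma fst_Tmap:
  "fst (Tmap m e j v) = - e * fst v * sin (ang m j) - e\<^sup>2 * snd v * cos (ang m j) + cos (ang m j)"
  by (simp add: Tmap_def Urot_def pj_def)

lemma snd_Tmap:
  "snd (Tmap m e j v) = e * fst v * cos (ang m j) - e\<^sup>2 * snd v * sin (ang m j) + sin (ang m j)"
  by (simp add: Tmap_def Urot_def pj_def)

definition in_box :: "pt set \<Rightarrow> bool" where
  "in_box S \<longleftrightarrow> (\<forall>x\<in>S. \<bar>fst x\<bar> \<le> 2 \<and> \<bar>snd x\<bar> \<le> 2)"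

lemma Tmap_in_box:
  fixes e :: real
  assumes "0 < e" "e \<le> 1/8" "\<bar>fst v\<bar> \<le> 2" "\<bar>snd v\<bar> \<le> 2"
  shows "\<bar>fst (Tmap m e j v)\<bar> \<le> 2 \<and> \<bar>snd (Tmap m e j v)\<bar> \<le> 2"
proof -
  have sc: "\<bar>sin (ang m j)\<bar> \<le> 1" "\<bar>cos (ang m j)\<bar> \<le> 1" by (auto simp: abs_sin_le_one abs_cos_le_one)
  have ex: "\<bar>e * fst v\<bar> \<le> 1/8 * 2" using abs_mult_le_mult[of e "1/8" "fst v" 2] assms by simp
  have "e * e \<le> 1/8 * 1" using mult_mono[of e "1/8" e 1] assms by simp
  then have "\<bar>e\<^sup>2\<bar> \<le> 1/8" by (simp add: power2_eq_square)
  then have ey: "\<bar>e\<^sup>2 * snd v\<bar> \<le> 1/8 * 2" using abs_mult_le_mult assms(4) by blast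
  have "\<bar>e * fst v * sin (ang m j)\<bar> \<le> 1/4 * 1" "\<bar>e * fst v * cos (ang m j)\<bar> \<le> 1/4 * 1"
       "\<bar>e\<^sup>2 * snd v * cos (ang m j)\<bar> \<le> 1/4 * 1" "\<bar>e\<^sup>2 * snd v * sin (ang m j)\<bar> \<le> 1/4 * 1"
    using abs_mult_le_mult[OF ex] abs_mult_le_mult[OF ey] sc by simp_all
  then show ?thesis unfolding fst_Tmap snd_Tmap using sc by linarith
qed

text \<open>The normal (cos \<theta> + e a sin \<theta>, sin \<theta> - e a cos \<theta>) below is the image of the normal
  (a, 1) of the line  a x + y = c  under the inverse transpose of the linear part of T_i,
  rescaled by -e^2.\<close>

lemma Tmap_normal_same:
  "(cos (ang m i) + e * a * sin (ang m i)) * fst (Tmap m e i u)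
     + (sin (ang m i) - e * a * cos (ang m i)) * snd (Tmap m e i u)
   = 1 - e\<^sup>2 * (a * fst u + snd u)"
proof -
  let ?s = "sin (ang m i)" and ?c = "cos (ang m i)"
  have "(?c + e * a * ?s) * fst (Tmap m e i u) + (?s - e * a * ?c) * snd (Tmap m e i u)
      = (?s\<^sup>2 + ?c\<^sup>2) * (1 - e\<^sup>2 * (a * fst u + snd u))"
    unfolding fst_Tmap snd_Tmap by algebra
  then show ?thesis by simp
qed

lemma Tmap_normal_other_le:
  fixes e a :: real
  assumes u: "\<bar>fst u\<bar> \<le> 2" "\<bar>snd u\<bar> \<le> 2" and e: "0 < e" "e \<le> 1" "\<bar>e * a\<bar> \<le> 1/2"
  shows "(cos (ang m i) + e * a * sin (ang m i)) * fst (Tmap m e j u)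
       + (sin (ang m i) - e * a * cos (ang m i)) * snd (Tmap m e j u)
     \<le> (cos (ang m i) * cos (ang m j) + sin (ang m i) * sin (ang m j)) + 2 * \<bar>e * a\<bar> + 12 * e"
proof -
  define si ci sj cj where "si = sin (ang m i)" and "ci = cos (ang m i)"
    and "sj = sin (ang m j)" and "cj = cos (ang m j)"
  have sc: "\<bar>si\<bar> \<le> 1" "\<bar>ci\<bar> \<le> 1" "\<bar>sj\<bar> \<le> 1" "\<bar>cj\<bar> \<le> 1"
    unfolding si_def ci_def sj_def cj_def by (auto simp: abs_sin_le_one abs_cos_le_one)
  define nx ny where "nx = ci + e * a * si" and "ny = si - e * a * ci"
  have "\<bar>e * a * si\<bar> \<le> 1/2 * 1" "\<bar>e * a * ci\<bar> \<le> 1/2 * 1"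
    using abs_mult_le_mult e(3) sc by blast+
  then have n: "\<bar>nx\<bar> \<le> 3/2" "\<bar>ny\<bar> \<le> 3/2" unfolding nx_def ny_def using sc by linarith+
  have expand: "nx * fst (Tmap m e j u) + ny * snd (Tmap m e j u)
     = (ci * cj + si * sj) + e * a * (si * cj - ci * sj)
       + e * (fst u * (ny * cj - nx * sj)) - e\<^sup>2 * (snd u * (nx * cj + ny * sj))"
    unfolding fst_Tmap snd_Tmap nx_def ny_def
      si_def[symmetric] ci_def[symmetric] sj_def[symmetric] cj_def[symmetric]
    by (simp add: algebra_simps power2_eq_square)
  have "\<bar>si * cj\<bar> \<le> 1 * 1" "\<bar>ci * sj\<bar> \<le> 1 * 1" using abs_mult_le_mult sc by blast+
  then have "\<bar>si * cj - ci * sj\<bar> \<le> 2" by linarith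
  then have t0: "\<bar>e * a * (si * cj - ci * sj)\<bar> \<le> \<bar>e * a\<bar> * 2" using abs_mult_le_mult by blast
  have "\<bar>ny * cj\<bar> \<le> 3/2 * 1" "\<bar>nx * sj\<bar> \<le> 3/2 * 1" "\<bar>nx * cj\<bar> \<le> 3/2 * 1" "\<bar>ny * sj\<bar> \<le> 3/2 * 1"
    using abs_mult_le_mult n sc by blast+
  then have "\<bar>ny * cj - nx * sj\<bar> \<le> 3" "\<bar>nx * cj + ny * sj\<bar> \<le> 3" by linarith+
  then have u1: "\<bar>fst u * (ny * cj - nx * sj)\<bar> \<le> 2 * 3"
    and u2: "\<bar>snd u * (nx * cj + ny * sj)\<bar> \<le> 2 * 3"
    using abs_mult_le_mult u by blast+
  have "\<bar>e\<bar> \<le> e" "\<bar>e\<^sup>2\<bar> \<le> e" using e by (simp_all add: power2_eq_square mult_left_le)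
  from abs_mult_le_mult[OF this(1) u1] abs_mult_le_mult[OF this(2) u2]
  have t1: "\<bar>e * (fst u * (ny * cj - nx * sj))\<bar> \<le> e * 6"
    and t2: "\<bar>e\<^sup>2 * (snd u * (nx * cj + ny * sj))\<bar> \<le> e * 6" by simp_all
  show ?thesis using expand t0 t1 t2 unfolding nx_def ny_def si_def ci_def sj_def cj_def by linarith
qed

definition line_separated :: "real \<Rightarrow> pt set \<Rightarrow> pt set \<Rightarrow> bool" where
  "line_separated M A B \<longleftrightarrow> (\<exists>a c. \<bar>a\<bar> \<le> M \<and> \<bar>c\<bar> \<le> M \<and>
     (\<forall>x\<in>A. a * fst x + snd x < c) \<and> (\<forall>x\<in>B. c < a * fst x + snd x))"

lemma line_separated_imp_convex_hull_disjoint: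
  assumes "line_separated M A B"
  shows "convex hull A \<inter> convex hull B = {}"
proof -
  obtain a c where A: "\<forall>x\<in>A. a * fst x + snd x < c" and B: "\<forall>x\<in>B. c < a * fst x + snd x"
    using assms unfolding line_separated_def by blast
  have "convex hull A \<subseteq> {x. inner (a, 1::real) x < c}"
    by (rule hull_minimal) (use A in \<open>auto simp: convex_halfspace_lt\<close>)
  moreover have "convex hull B \<subseteq> {x. inner (a, 1::real) x > c}"
    by (rule hull_minimal) (use B in \<open>auto simp: convex_halfspace_gt\<close>)
  ultimately show ?thesis by fastforce
qed

lemma line_separated_if_normal:
  fixes nx ny C M :: real
  assumes "0 < ny" "\<bar>nx / ny\<bar> \<le> M" "\<bar>C / ny\<bar> \<le> M"
    and "\<forall>x\<in>A. nx * fst x + ny * snd x < C" "\<forall>x\<in>B. C < nx * fst x + ny * snd x"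
  shows "line_separated M A B"
proof -
  have rescale: "nx / ny * fst x + snd x = (nx * fst x + ny * snd x) / ny" for x :: pt
    using assms(1) by (simp add: field_simps)
  have "\<forall>x\<in>A. nx / ny * fst x + snd x < C / ny" "\<forall>x\<in>B. C / ny < nx / ny * fst x + snd x"
    unfolding rescale using assms by (simp_all add: divide_strict_right_mono)
  then show ?thesis unfolding line_separated_def using assms(2,3) by blast
qed

text \<open>The three constraints on \<epsilon> keep the square [-2,2] x [-2,2] invariant, keep the second
  coordinate of the new normal above sin \<Delta> / 2 (so the new slope stays below 3 / sin \<Delta>), and make
  the O(\<epsilon>) error smaller than the gap 1 - cos \<Delta>.\<close>

definition slope_bound :: "nat \<Rightarrow> real" where
  "slope_bound m = 4 / sin (ang_step m)"

definition eps_bound :: "nat \<Rightarrow> real" where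
  "eps_bound m = min (1/8) (min ((sin (ang_step m))\<^sup>2 / 8)
                               ((1 - cos (ang_step m)) / (3 * slope_bound m + 16)))"

lemma slope_bound_ge_1: "m \<ge> 1 \<Longrightarrow> 1 \<le> slope_bound m"
proof -
  assume "m \<ge> 1"
  moreover have "sin (ang_step m) \<le> 4" using sin_le_one[of "ang_step m"] by linarith
  ultimately show ?thesis using sin_ang_step_pos by (simp add: slope_bound_def le_divide_eq)
qed

lemma eps_bound_pos: "m \<ge> 1 \<Longrightarrow> 0 < eps_bound m"
  using sin_ang_step_pos[of m] cos_ang_step_less_1[of m] slope_bound_ge_1[of m]
  by (simp add: eps_bound_def)

lemma eps_bound_le:
  "eps_bound m \<le> 1/8" "eps_bound m \<le> (sin (ang_step m))\<^sup>2 / 8"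
  "eps_bound m \<le> (1 - cos (ang_step m)) / (3 * slope_bound m + 16)"
  unfolding eps_bound_def by linarith+

lemma eps_mult_slope_bound_le:
  assumes "m \<ge> 1" "0 < e" "e \<le> eps_bound m"
  shows "e * slope_bound m \<le> sin (ang_step m) / 2"
proof -
  let ?s = "sin (ang_step m)"
  have "e * slope_bound m = 4 * e / ?s" by (simp add: slope_bound_def)
  also have "\<dots> \<le> 4 * (?s\<^sup>2 / 8) / ?s"
    using assms eps_bound_le(2)[of m] sin_ang_step_pos[of m] by (intro divide_right_mono) auto
  also have "\<dots> = ?s / 2" using sin_ang_step_pos[OF assms(1)] by (simp add: power2_eq_square)
  finally show ?thesis .
qed

lemma Tmap_normal_other_less:
  fixes e a c :: real
  assumes m: "m \<ge> 1" and e: "0 < e" "e \<le> eps_bound m"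
    and ac: "\<bar>a\<bar> \<le> slope_bound m" "\<bar>c\<bar> \<le> slope_bound m"
    and ij: "i \<in> {1..m}" "j \<in> {1..m}" "i \<noteq> j" and u: "\<bar>fst u\<bar> \<le> 2" "\<bar>snd u\<bar> \<le> 2"
  shows "(cos (ang m i) + e * a * sin (ang m i)) * fst (Tmap m e j u)
       + (sin (ang m i) - e * a * cos (ang m i)) * snd (Tmap m e j u) < 1 - e\<^sup>2 * c"
proof -
  let ?M = "slope_bound m" and ?g = "1 - cos (ang_step m)"
  have e1: "e \<le> 1" using e eps_bound_le(1)[of m] by linarith
  have eM: "e * ?M \<le> 1/2" using eps_mult_slope_bound_le[OF m e] sin_le_one[of "ang_step m"] by linarith
  note ea = abs_eps_mult_le(1)[OF e(1) e1 ac(1)] and ec = abs_eps_mult_le(2)[OF e(1) e1 ac(2)]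
  have "e \<le> ?g / (3 * ?M + 16)" using e eps_bound_le(3)[of m] by linarith
  then have "e * (3 * ?M + 16) \<le> ?g" using slope_bound_ge_1[OF m] by (simp add: le_divide_eq)
  then have margin: "3 * (e * ?M) + 16 * e \<le> ?g" by (simp add: algebra_simps)
  have "(cos (ang m i) + e * a * sin (ang m i)) * fst (Tmap m e j u)
       + (sin (ang m i) - e * a * cos (ang m i)) * snd (Tmap m e j u)
     \<le> (cos (ang m i) * cos (ang m j) + sin (ang m i) * sin (ang m j)) + 2 * \<bar>e * a\<bar> + 12 * e"
    by (rule Tmap_normal_other_le[OF u e(1) e1]) (use ea eM in linarith)
  also have "\<dots> \<le> 1 - ?g + 2 * (e * ?M) + 12 * e" using cos_ang_diff_le[OF ij] ea by linarith
  finally show ?thesis using margin ec e by linarith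
qed

lemma normal_coordinate_bounds:
  fixes e a :: real
  assumes m: "m \<ge> 1" and e: "0 < e" "e \<le> eps_bound m" and a: "\<bar>a\<bar> \<le> slope_bound m"
    and i: "i \<in> {1..m}"
  shows "sin (ang_step m) / 2 \<le> sin (ang m i) - e * a * cos (ang m i)"
    and "\<bar>cos (ang m i) + e * a * sin (ang m i)\<bar> \<le> 3/2"
proof -
  let ?s = "sin (ang_step m)"
  have ea: "\<bar>e * a\<bar> \<le> ?s / 2"
    using abs_eps_mult_le(1)[OF e(1) _ a] eps_mult_slope_bound_le[OF m e] e eps_bound_le(1)[of m]
    by linarith
  then have "\<bar>e * a\<bar> \<le> 1/2" using sin_le_one[of "ang_step m"] by linarith
  with ea have "\<bar>e * a * cos (ang m i)\<bar> \<le> ?s / 2 * 1" "\<bar>e * a * sin (ang m i)\<bar> \<le> 1/2 * 1"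
    using abs_mult_le_mult abs_cos_le_one abs_sin_le_one by blast+
  then show "?s / 2 \<le> sin (ang m i) - e * a * cos (ang m i)"
    and "\<bar>cos (ang m i) + e * a * sin (ang m i)\<bar> \<le> 3/2"
    using sin_ang_step_le_sin_ang[OF i] abs_cos_le_one[of "ang m i"] by linarith+
qed

lemma abs_divide_le_slope_bound:
  assumes "m \<ge> 1" "\<bar>z\<bar> \<le> 3/2" "sin (ang_step m) / 2 \<le> y"
  shows "\<bar>z / y\<bar> \<le> slope_bound m"
proof -
  let ?s = "sin (ang_step m)"
  have s: "0 < ?s" using sin_ang_step_pos[OF assms(1)] .
  then have "0 < y" using assms(3) by linarith
  then have "\<bar>z / y\<bar> = \<bar>z\<bar> / y" by simp
  also have "\<dots> \<le> (3/2) / (?s / 2)" using assms s by (intro frac_le) auto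
  also have "\<dots> \<le> slope_bound m" using s by (simp add: slope_bound_def field_simps)
  finally show ?thesis .
qed

lemma line_separated_build:
  assumes m: "m \<ge> 1" and e: "0 < e" "e \<le> eps_bound m" and i: "i \<in> {1..m}"
    and box: "\<forall>j\<in>{1..m}. in_box (snd (f j))"
    and sep: "line_separated (slope_bound m) (fst (f i)) (snd (f i))"
  shows "line_separated (slope_bound m) (fst (build m e (f, i))) (snd (build m e (f, i)))"
proof -
  obtain a c where ac: "\<bar>a\<bar> \<le> slope_bound m" "\<bar>c\<bar> \<le> slope_bound m"
      and A: "\<forall>x\<in>fst (f i). a * fst x + snd x < c" and B: "\<forall>x\<in>snd (f i). c < a * fst x + snd x"
    using sep unfolding line_separated_def by blast
  define nx ny where "nx = cos (ang m i) + e * a * sin (ang m i)"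
    and "ny = sin (ang m i) - e * a * cos (ang m i)"
  note n = normal_coordinate_bounds[OF m e ac(1) i, folded nx_def ny_def]
  have "e \<le> 1" using e eps_bound_le(1)[of m] by linarith
  then have "\<bar>e\<^sup>2 * c\<bar> \<le> 1/2"
    using abs_eps_mult_le(2)[OF e(1) _ ac(2)] eps_mult_slope_bound_le[OF m e]
      sin_le_one[of "ang_step m"] by linarith
  then have level: "\<bar>1 - e\<^sup>2 * c\<bar> \<le> 3/2" by linarith
  have "\<forall>x\<in>fst (build m e (f, i)). nx * fst x + ny * snd x < 1 - e\<^sup>2 * c"
  proof
    fix x assume "x \<in> fst (build m e (f, i))"
    then obtain j u where j: "j \<in> {1..m}" "u \<in> snd (f j)" and x: "x = Tmap m e j u"
      by (auto simp: build_def)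
    show "nx * fst x + ny * snd x < 1 - e\<^sup>2 * c"
    proof (cases "j = i")
      case True
      then show ?thesis using B j(2) e Tmap_normal_same[of m i e a u] by (simp add: x nx_def ny_def)
    next
      case False
      then show ?thesis using box j Tmap_normal_other_less[OF m e ac i j(1)]
        unfolding x nx_def ny_def in_box_def by blast
    qed
  qed
  moreover have "\<forall>x\<in>snd (build m e (f, i)). 1 - e\<^sup>2 * c < nx * fst x + ny * snd x"
    using A e Tmap_normal_same[of m i e a] by (auto simp: build_def nx_def ny_def)
  moreover have "0 < ny" using n(1) sin_ang_step_pos[OF m] by linarith
  ultimately show ?thesis
    using abs_divide_le_slope_bound[OF m n(2) n(1)] abs_divide_le_slope_bound[OF m level n(1)]
    by (intro line_separated_if_normal)
qed

lemma disjoint_build_imp_disjoint: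
  assumes "fst (build m e (f, i)) \<inter> snd (build m e (f, i)) = {}" "i \<in> {1..m}"
  shows "fst (f i) \<inter> snd (f i) = {}"
proof -
  have "Tmap m e i u \<in> fst (build m e (f, i)) \<inter> snd (build m e (f, i))"
    if "u \<in> fst (f i)" "u \<in> snd (f i)" for u
    using that assms(2) by (auto simp: build_def)
  then show ?thesis using assms(1) by blast
qed

lemma in_box_build:
  assumes "0 < e" "e \<le> 1/8" "i \<in> {1..m}" "\<forall>j\<in>{1..m}. in_box (fst (f j) \<union> snd (f j))"
  shows "in_box (fst (build m e (f, i)) \<union> snd (build m e (f, i)))"
  unfolding in_box_def
proof
  fix x assume "x \<in> fst (build m e (f, i)) \<union> snd (build m e (f, i))"
  then have "\<exists>j\<in>{1..m}. \<exists>u\<in>fst (f j) \<union> snd (f j). x = Tmap m e j u"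
    using assms(3) unfolding build_def by auto
  then show "\<bar>fst x\<bar> \<le> 2 \<and> \<bar>snd x\<bar> \<le> 2"
    using assms(4) Tmap_in_box[OF assms(1,2)] unfolding in_box_def by fast
qed

definition good_pair :: "nat \<Rightarrow> pr \<Rightarrow> bool" where
  "good_pair m P \<longleftrightarrow> in_box (fst P \<union> snd P) \<and>
     (fst P \<inter> snd P = {} \<longrightarrow> line_separated (slope_bound m) (fst P) (snd P))"

lemma good_pair_build:
  assumes m: "m \<ge> 1" and e: "0 < e" "e \<le> eps_bound m" and i: "i \<in> {1..m}"
    and good: "\<forall>j\<in>{1..m}. good_pair m (f j)"
  shows "good_pair m (build m e (f, i))"
proof -
  have box: "\<forall>j\<in>{1..m}. in_box (fst (f j) \<union> snd (f j))"
    using good unfolding good_pair_def by blast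
  then have "\<forall>j\<in>{1..m}. in_box (snd (f j))" unfolding in_box_def by blast
  then show ?thesis
    using in_box_build[OF e(1) _ i box] eps_bound_le(1)[of m] e
      line_separated_build[OF m e i] disjoint_build_imp_disjoint[OF _ i] good i
    unfolding good_pair_def by force
qed

lemma good_pair_base: "m \<ge> 1 \<Longrightarrow> P \<in> set_pmf base_pmf \<Longrightarrow> good_pair m P"
  using slope_bound_ge_1[of m]
  by (auto simp: base_pmf_def good_pair_def in_box_def line_separated_def split: if_splits
      intro!: exI[of _ 0] exI[of _ 1])

lemma set_pmf_pair_Pi_pmf_of_set:
  assumes "(m :: nat) \<ge> 1"
    and "w \<in> set_pmf (pair_pmf (Pi_pmf {1..m} d (\<lambda>_. p)) (pmf_of_set {1..m}))"
  shows "(\<forall>j\<in>{1..m}. fst w j \<in> set_pmf p) \<and> snd w \<in> {1..m}"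
proof -
  have "set_pmf (Pi_pmf {1..m} d (\<lambda>_. p)) = PiE_dflt {1..m} d (\<lambda>_. set_pmf p)"
    using set_Pi_pmf[of "{1..m}" d "\<lambda>_. p"] by (simp add: comp_def)
  moreover have "set_pmf (pmf_of_set {1..m}) = {1..m}" using assms(1) by (intro set_pmf_of_set) auto
  ultimately show ?thesis using assms(2) by (auto simp: set_pair_pmf PiE_dflt_def)
qed

lemma good_pair_Ipmf:
  assumes "m \<ge> 1" "\<forall>k. 0 < eps k \<and> eps k \<le> eps_bound m"
  shows "P \<in> set_pmf (Ipmf m eps r) \<Longrightarrow> good_pair m P"
  using assms
proof (induction m eps r arbitrary: P rule: Ipmf.induct)
  case (3 m eps k)
  then obtain w where w: "w \<in> set_pmf (pair_pmf (Pi_pmf {1..m} undefined (\<lambda>_. Ipmf m eps (Suc k)))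
      (pmf_of_set {1..m}))" and P: "P = build m (eps (Suc (Suc k))) w"
    by auto
  note support = set_pmf_pair_Pi_pmf_of_set[OF "3.prems"(2) w]
  show ?case unfolding P using good_pair_build[of m "eps (Suc (Suc k))" "snd w" "fst w"] support
    "3.IH" "3.prems"(2,3) by simp
qed (use good_pair_base in simp_all)

lemma good_pair_joint:
  assumes "m \<ge> 1" "\<forall>k. 0 < eps k \<and> eps k \<le> eps_bound m" "w \<in> set_pmf (joint m eps r)"
  shows "snd w \<in> {1..m}" "\<forall>j\<in>{1..m}. good_pair m (fst w j)"
proof -
  have "(\<forall>j\<in>{1..m}. fst w j \<in> set_pmf (Ipmf m eps (r - 1))) \<and> snd w \<in> {1..m}"
    using assms(3) unfolding joint_def by (rule set_pmf_pair_Pi_pmf_of_set[OF assms(1)])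
  then show "snd w \<in> {1..m}" "\<forall>j\<in>{1..m}. good_pair m (fst w j)"
    using good_pair_Ipmf[OF assms(1,2)] by blast+
qed

lemma disjointness_build_iff:
  assumes m: "m \<ge> 1" and e: "0 < e" "e \<le> eps_bound m" and i: "i \<in> {1..m}"
    and good: "\<forall>j\<in>{1..m}. good_pair m (f j)"
  defines "A \<equiv> fst (build m e (f, i))" and "B \<equiv> snd (build m e (f, i))"
  shows "convex hull A \<inter> convex hull B = {} \<longleftrightarrow> fst (f i) \<inter> snd (f i) = {}"
    and "fst (f i) \<inter> snd (f i) = {} \<longleftrightarrow> A \<inter> B = {}"
proof -
  have hull: "A \<inter> B = {}" if "convex hull A \<inter> convex hull B = {}"
    using that hull_subset[of A convex] hull_subset[of B convex] by blast
  have sep: "convex hull A \<inter> convex hull B = {}" if "fst (f i) \<inter> snd (f i) = {}"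
  proof -
    have "line_separated (slope_bound m) (fst (f i)) (snd (f i))"
      using that good i unfolding good_pair_def by blast
    moreover have "\<forall>j\<in>{1..m}. in_box (snd (f j))"
      using good unfolding good_pair_def in_box_def by blast
    ultimately show ?thesis
      unfolding A_def B_def
      by (meson line_separated_imp_convex_hull_disjoint line_separated_build[OF m e i])
  qed
  have disjoint_i: "fst (f i) \<inter> snd (f i) = {}" if "A \<inter> B = {}"
    using disjoint_build_imp_disjoint that i unfolding A_def B_def .
  show "convex hull A \<inter> convex hull B = {} \<longleftrightarrow> fst (f i) \<inter> snd (f i) = {}"
    "fst (f i) \<inter> snd (f i) = {} \<longleftrightarrow> A \<inter> B = {}"
    using hull sep disjoint_i by (intro iffI; simp)+
qed

theorem lemma9:
  fixes m :: nat
  assumes "m \<ge> 1"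
  shows "\<exists>\<delta> :: nat \<Rightarrow> real. (\<forall>k. \<delta> k > 0) \<and>
    (\<forall>r (eps :: nat \<Rightarrow> real). r \<ge> 2 \<longrightarrow> (\<forall>k. 0 < eps k \<and> eps k < \<delta> k) \<longrightarrow>
      (AE w in measure_pmf (joint m eps r).
         let A = fst (build m (eps r) w); B = snd (build m (eps r) w);
             Ai = fst (fst w (snd w)); Bi = snd (fst w (snd w))
         in (convex hull A \<inter> convex hull B = {} \<longleftrightarrow> Ai \<inter> Bi = {}) \<and>
            (Ai \<inter> Bi = {} \<longleftrightarrow> A \<inter> B = {})))"
proof (intro exI[of _ "\<lambda>_. eps_bound m"] conjI allI impI AE_pmfI)
  show "0 < eps_bound m" for k :: nat using eps_bound_pos[OF assms] .
next
  fix r :: nat and eps :: "nat \<Rightarrow> real" and w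
  assume "\<forall>k. 0 < eps k \<and> eps k < eps_bound m" and w: "w \<in> set_pmf (joint m eps r)"
  then have eps: "\<forall>k. 0 < eps k \<and> eps k \<le> eps_bound m" by (auto intro: less_imp_le)
  note good = good_pair_joint[OF assms eps w]
  show "let A = fst (build m (eps r) w); B = snd (build m (eps r) w);
            Ai = fst (fst w (snd w)); Bi = snd (fst w (snd w))
        in (convex hull A \<inter> convex hull B = {} \<longleftrightarrow> Ai \<inter> Bi = {}) \<and> (Ai \<inter> Bi = {} \<longleftrightarrow> A \<inter> B = {})"
    using disjointness_build_iff[OF assms _ _ good, of "eps r"] eps
    unfolding Let_def prod.collapse by simp
qed

end
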